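(* Let $G=(V,E)$ be a finite simple graph with maximum degree $\Delta$, let $w\in(0,1)$ and $M\subseteq E$. Then for all $A\in\mathcal W=\mathcal C_0\cup\mathcal C_2$ and all edges $e=\{u,v\}\in E$ with $A\oplus e\in\mathcal W$, \[ \Psi(A)\,\lambda(A)\,P(A,A\oplus e)\;\ge\;\frac{w^{|(A\oplus M)\cup e|}}{2\Delta}\;\ge\;\frac{w^{|(A\cup e)\oplus M|}}{2\Delta w^{-1}} . \]
   Context: Subgraphs of $G$ are identified with edge subsets $A\subseteq E$; $\oplus$ denotes symmetric difference, $(A\oplus M)\cup e$ means $(A\oplus M)\cup\{e\}$, $d(u)$ is the degree of $u$ in $G$, and $\partial A$ is the set of vertices of odd degree in $(V,A)$. $\mathcal C_k=\{A\subseteq E:|\partial A|=k\}$. $\lambda(A)=w^{|A\oplus M|}$. $\Psi(A)=|V|$ if $A\in\mathcal C_0$ and $\Psi(A)=2$ if $A\in\mathcal C_2$. $P$ is the transition matrix of the lazy worm process: for $A\in\mathcal W$ and $e=uv\in E$ with $A\oplus e\in\mathcal W$, (i) if $A\in\mathcal C_0$: $P(A,A\oplus e)=w^{\mathbf 1[e\notin A\oplus M]}\frac{1}{2|V|}\bigl(\frac1{d(u)}+\frac1{d(v)}\bigr)$; (ii) if $A\in\mathcal C_2$ and $A\oplus e\in\mathcal C_0$: $P(A,A\oplus e)=w^{\mathbf 1[e\notin A\oplus M]}\frac14\bigl(\frac1{d(u)}+\frac1{d(v)}\bigr)$; (iii) if $A\in\mathcal C_2$, $A\oplus e\in\mathcal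 C_2$ and $u\in\partial A$: $P(A,A\oplus e)=\min\!\bigl(\frac{d(u)}{d(v)}w^{\mathbf 1[e\notin A\oplus M]-\mathbf 1[e\in A\oplus M]},1\bigr)\frac{1}{4d(u)}$. *)

theory Defs
  imports Complex_Main
begin

definition simple_graph :: "'a set \<Rightarrow> 'a set set \<Rightarrow> bool" where
  "simple_graph V E \<longleftrightarrow> finite V \<and> (\<forall>e\<in>E. \<exists>u v. u \<in> V \<and> v \<in> V \<and> u \<noteq> v \<and> e = {u, v})"

definition symdiff :: "'b set \<Rightarrow> 'b set \<Rightarrow> 'b set" where
  "symdiff A B = (A - B) \<union> (B - A)"

definition deg :: "'a set set \<Rightarrow> 'a \<Rightarrow> nat" where
  "deg A u = card {e \<in> A. u \<in> e}"

definition max_degree :: "'a set \<Rightarrow> 'a set set \<Rightarrow> nat" where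
  "max_degree V E = Max (deg E ` V)"

definition bdry :: "'a set \<Rightarrow> 'a set set \<Rightarrow> 'a set" where
  "bdry V A = {v \<in> V. odd (deg A v)}"

definition Ck :: "'a set \<Rightarrow> 'a set set \<Rightarrow> nat \<Rightarrow> 'a set set set" where
  "Ck V E k = {A. A \<subseteq> E \<and> card (bdry V A) = k}"

definition Wset :: "'a set \<Rightarrow> 'a set set \<Rightarrow> 'a set set set" where
  "Wset V E = Ck V E 0 \<union> Ck V E 2"

definition lam :: "real \<Rightarrow> 'a set set \<Rightarrow> 'a set set \<Rightarrow> real" where
  "lam w M A = w ^ card (symdiff A M)"

definition Psi :: "'a set \<Rightarrow> 'a set set \<Rightarrow> 'a set set \<Rightarrow> real" where
  "Psi V E A = (if A \<in> Ck V E 0 then real (card V) else if A \<in> Ck V E 2 then 2 else 0)"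

definition ind :: "bool \<Rightarrow> int" where
  "ind b = (if b then 1 else 0)"

text \<open>Case (iii) with u the endpoint of e = uv lying in \<partial>A.\<close>
definition P_move :: "'a set set \<Rightarrow> 'a set set \<Rightarrow> real \<Rightarrow> 'a set set \<Rightarrow> 'a \<Rightarrow> 'a \<Rightarrow> real" where
  "P_move E M w A u v =
     (let e = {u, v}; B = symdiff A M in
      min ((real (deg E u) / real (deg E v)) * w powi (ind (e \<notin> B) - ind (e \<in> B))) 1
        * (1 / (4 * real (deg E u))))"

text \<open>Transition probability P(A, A \<oplus> e) of the lazy worm process, e = {u, v},
  defined for A \<in> W and A \<oplus> e \<in> W.\<close>
definition P_worm :: "'a set \<Rightarrow> 'a set set \<Rightarrow> 'a set set \<Rightarrow> real \<Rightarrow> 'a set set \<Rightarrow> 'a \<Rightarrow> 'a \<Rightarrow> real" where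
  "P_worm V E M w A u v =
     (let e = {u, v}; A' = symdiff A {e};
          f = w ^ (if e \<notin> symdiff A M then 1 else 0) in
      if A \<in> Ck V E 0 then
        f * (1 / (2 * real (card V))) * (1 / real (deg E u) + 1 / real (deg E v))
      else if A \<in> Ck V E 2 \<and> A' \<in> Ck V E 0 then
        f * (1 / 4) * (1 / real (deg E u) + 1 / real (deg E v))
      else if A \<in> Ck V E 2 \<and> A' \<in> Ck V E 2 then
        (if u \<in> bdry V A then P_move E M w A u v else P_move E M w A v u)
      else 0)"

end

theory Submission
  imports Defs
begin

text \<open>Write \<open>B = A \<oplus> M\<close> and \<open>c = |B \<union> e|\<close>, so that \<open>\<lambda>(A) w^[e \<notin> B] = w^c\<close>.
  In cases (i) and (ii), \<open>\<Psi>\<close> turns the prefactors \<open>1/(2|V|)\<close> and \<open>1/4\<close> into \<open>1/2\<close>, so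
  \<open>\<Psi> \<lambda> P = w^c (1/d(u) + 1/d(v)) / 2 \<ge> w^c / (2\<Delta>)\<close>. In case (iii),
  \<open>\<Psi> \<lambda> P = w^|B| min (w^(\<plusminus>1) / d(v), 1 / d(u)) / 2\<close>, and both \<open>w^|B|\<close> and
  \<open>w^|B| w^(\<plusminus>1)\<close> are at least \<open>w^c\<close>. The second inequality is
  \<open>|B \<union> e| \<le> |(A \<union> e) \<oplus> M| + 1\<close>.\<close>

lemma simple_graph_finite_edges:
  assumes "simple_graph V E"
  shows "finite E"
proof -
  have "E \<subseteq> Pow V"
    using assms by (fastforce simp: simple_graph_def)
  then show ?thesis
    using assms by (meson finite_Pow_iff finite_subset simple_graph_def)
qed

lemma simple_graph_edge_vertices:
  assumes "simple_graph V E" "{u, v} \<in> E"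
  shows "u \<in> V" "v \<in> V"
  using assms by (auto simp: simple_graph_def doubleton_eq_iff)

lemma deg_pos:
  assumes "finite E" "e \<in> E" "x \<in> e"
  shows "0 < deg E x"
proof -
  have "{f \<in> E. x \<in> f} \<noteq> {}"
    using assms by auto
  then show ?thesis
    using assms(1) by (simp add: deg_def card_gt_0_iff)
qed

lemma deg_le_max_degree:
  assumes "finite V" "x \<in> V"
  shows "deg E x \<le> max_degree V E"
  unfolding max_degree_def using assms by (intro Max_ge) auto

lemma Ck_unique:
  assumes "A \<in> Ck V E k" "A \<in> Ck V E l"
  shows "k = l"
  using assms by (simp add: Ck_def)

lemma power_card_Un_singleton:
  fixes w :: "'a::monoid_mult"
  assumes "finite B"
  shows "w ^ card B * w ^ (if e \<notin> B then 1 else 0) = w ^ card (B \<union> {e})"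
  using assms by (simp add: card_insert_if power_commutes)

lemma power_card_Un_singleton_le:
  fixes w :: "'a::linordered_field"
  assumes "finite B" "0 < w" "w < 1"
  shows "w ^ card (B \<union> {e}) \<le> w ^ card B"
    and "w ^ card (B \<union> {e}) \<le> w ^ card B * w powi (ind (e \<notin> B) - ind (e \<in> B))"
proof -
  show "w ^ card (B \<union> {e}) \<le> w ^ card B"
    using assms by (intro power_decreasing) (auto simp: card_insert_if)
  show "w ^ card (B \<union> {e}) \<le> w ^ card B * w powi (ind (e \<notin> B) - ind (e \<in> B))"
  proof (cases "e \<in> B")
    case True
    have "w ^ card B * 1 \<le> w ^ card B * inverse w"
      using assms by (intro mult_left_mono) (auto simp: one_le_inverse)
    then show ?thesis
      using True by (simp add: ind_def power_int_minus insert_absorb)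
  next
    case False
    then show ?thesis
      using assms(1) by (simp add: ind_def)
  qed
qed

lemma card_symdiff_Un_singleton_le:
  assumes "finite A" "finite M"
  shows "card (symdiff A M \<union> {e}) \<le> card (symdiff (A \<union> {e}) M) + 1"
proof -
  have fin: "finite (symdiff (A \<union> {e}) M)"
    using assms by (simp add: symdiff_def)
  have "symdiff A M \<union> {e} \<subseteq> insert e (symdiff (A \<union> {e}) M)"
    by (auto simp: symdiff_def)
  then have "card (symdiff A M \<union> {e}) \<le> card (insert e (symdiff (A \<union> {e}) M))"
    using fin by (intro card_mono) auto
  also have "\<dots> \<le> card (symdiff (A \<union> {e}) M) + 1"
    using fin by (simp add: card_insert_if)
  finally show ?thesis .
qed

lemma power_div_inverse_le:
  fixes w D :: real
  assumes "0 < w" "w \<le> 1" "0 \<le> D" "n \<le> m + 1"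
  shows "w ^ m / (2 * D * inverse w) \<le> w ^ n / (2 * D)"
proof -
  have "w ^ m / (2 * D * inverse w) = w ^ (m + 1) / (2 * D)"
    using assms(1) by (simp add: field_simps)
  also have "\<dots> \<le> w ^ n / (2 * D)"
    using assms by (intro divide_right_mono power_decreasing) auto
  finally show ?thesis .
qed

lemma half_sum_inverses_ge:
  fixes q a b D :: real
  assumes "0 \<le> q" "0 < a" "a \<le> D" "0 \<le> b"
  shows "q / (2 * D) \<le> q / 2 * (1 / a + 1 / b)"
proof -
  have "1 / D \<le> 1 / a" "0 \<le> 1 / b"
    using assms(2-4) frac_le[of 1 1 a D] by simp_all
  then have "1 / D \<le> 1 / a + 1 / b"
    by linarith
  then have "q / 2 * (1 / D) \<le> q / 2 * (1 / a + 1 / b)"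
    using assms(1) by (intro mult_left_mono) auto
  then show ?thesis
    by simp
qed

lemma P_move_lower_bound:
  fixes w D :: real
  assumes "0 < w" "w < 1" "finite (symdiff A M)"
    and "0 < deg E x" "real (deg E x) \<le> D" "0 < deg E y" "real (deg E y) \<le> D"
  shows "w ^ card (symdiff A M \<union> {{x, y}}) / (2 * D) \<le> 2 * lam w M A * P_move E M w A x y"
proof -
  define B where "B = symdiff A M"
  define s where "s = w powi (ind ({x, y} \<notin> B) - ind ({x, y} \<in> B))"
  define c where "c = card (B \<union> {{x, y}})"
  have "P_move E M w A x y = min (s / real (deg E y)) (1 / real (deg E x)) / 4"
    unfolding P_move_def Let_def B_def[symmetric] s_def[symmetric]
    using assms(4,6) by (auto simp: min_def field_simps)
  then have "2 * lam w M A * P_move E M w A x y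
      = min (w ^ card B * s / 2 * (1 / real (deg E y))) (w ^ card B / 2 * (1 / real (deg E x)))"
    using assms(1) by (simp add: lam_def B_def min_mult_distrib_left min_divide_distrib_right mult.commute)
  moreover have "w ^ c / 2 * (1 / D) \<le> w ^ card B * s / 2 * (1 / real (deg E y))"
    using power_card_Un_singleton_le(2)[of B w "{x, y}"] assms frac_le[of 1 1 "real (deg E y)" D]
    by (intro mult_mono) (auto simp: B_def s_def c_def)
  moreover have "w ^ c / 2 * (1 / D) \<le> w ^ card B / 2 * (1 / real (deg E x))"
    using power_card_Un_singleton_le(1)[of B w "{x, y}"] assms frac_le[of 1 1 "real (deg E x)" D]
    by (intro mult_mono) (auto simp: B_def c_def)
  ultimately show ?thesis
    by (simp add: B_def c_def)
qed

lemma Psi_lam_P_worm_C0: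
  fixes w :: real
  assumes "A \<in> Ck V E 0" "card V > 0" "finite (symdiff A M)"
  shows "Psi V E A * lam w M A * P_worm V E M w A u v
    = w ^ card (symdiff A M \<union> {{u, v}}) / 2 * (1 / real (deg E u) + 1 / real (deg E v))"
proof -
  have "Psi V E A * lam w M A * P_worm V E M w A u v
      = w ^ card (symdiff A M) * w ^ (if {u, v} \<notin> symdiff A M then 1 else 0) / 2
          * (1 / real (deg E u) + 1 / real (deg E v))"
    using assms(1,2) by (simp add: Psi_def lam_def P_worm_def Let_def field_simps)
  then show ?thesis
    using power_card_Un_singleton[OF assms(3), of w "{u, v}"] by simp
qed

lemma Psi_lam_P_worm_C2_C0:
  fixes w :: real
  assumes "A \<in> Ck V E 2" "symdiff A {{u, v}} \<in> Ck V E 0" "finite (symdiff A M)"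
  shows "Psi V E A * lam w M A * P_worm V E M w A u v
    = w ^ card (symdiff A M \<union> {{u, v}}) / 2 * (1 / real (deg E u) + 1 / real (deg E v))"
proof -
  have "A \<notin> Ck V E 0"
    using assms(1) Ck_unique[of A V E 2 0] by auto
  then have "Psi V E A * lam w M A * P_worm V E M w A u v
      = w ^ card (symdiff A M) * w ^ (if {u, v} \<notin> symdiff A M then 1 else 0) / 2
          * (1 / real (deg E u) + 1 / real (deg E v))"
    using assms(1,2) by (simp add: Psi_def lam_def P_worm_def Let_def field_simps)
  then show ?thesis
    using power_card_Un_singleton[OF assms(3), of w "{u, v}"] by simp
qed

lemma Psi_lam_P_worm_C2_C2:
  fixes w :: real
  assumes "A \<in> Ck V E 2" "symdiff A {{u, v}} \<in> Ck V E 2"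
  shows "Psi V E A * lam w M A * P_worm V E M w A u v
    = 2 * lam w M A * (if u \<in> bdry V A then P_move E M w A u v else P_move E M w A v u)"
proof -
  have "A \<notin> Ck V E 0" "symdiff A {{u, v}} \<notin> Ck V E 0"
    using assms Ck_unique[of A V E 2 0] Ck_unique[of "symdiff A {{u, v}}" V E 2 0] by auto
  then show ?thesis
    using assms by (simp add: Psi_def P_worm_def Let_def)
qed

lemma Psi_lam_P_worm_lower_bound:
  fixes w :: real
  assumes "simple_graph V E" "0 < w" "w < 1" "finite M"
    and "A \<in> Wset V E" "{u, v} \<in> E" "symdiff A {{u, v}} \<in> Wset V E"
  shows "w ^ card (symdiff A M \<union> {{u, v}}) / (2 * real (max_degree V E))
    \<le> Psi V E A * lam w M A * P_worm V E M w A u v"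
proof -
  define D where "D = real (max_degree V E)"
  define q where "q = w ^ card (symdiff A M \<union> {{u, v}})"
  have fin_E: "finite E"
    using assms(1) by (rule simple_graph_finite_edges)
  have fin_B: "finite (symdiff A M)"
    using assms(4,5) fin_E finite_subset by (auto simp: symdiff_def Wset_def Ck_def)
  have deg_bounds: "0 < deg E x" "real (deg E x) \<le> D" if "x \<in> {u, v}" for x
    using that deg_pos[OF fin_E assms(6)] deg_le_max_degree simple_graph_edge_vertices[OF assms(1,6)]
      assms(1) by (auto simp: D_def simple_graph_def)
  have symmetric_case: "q / (2 * D) \<le> q / 2 * (1 / real (deg E u) + 1 / real (deg E v))"
    using deg_bounds assms(2) by (intro half_sum_inverses_ge) (auto simp: q_def)
  consider "A \<in> Ck V E 0"
    | "A \<in> Ck V E 2" "symdiff A {{u, v}} \<in> Ck V E 0"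
    | "A \<in> Ck V E 2" "symdiff A {{u, v}} \<in> Ck V E 2"
    using assms(5,7) by (auto simp: Wset_def)
  then show ?thesis
  proof cases
    case 1
    have "card V > 0"
      using assms(1) simple_graph_edge_vertices[OF assms(1,6)] card_gt_0_iff
      by (auto simp: simple_graph_def)
    then have "Psi V E A * lam w M A * P_worm V E M w A u v
        = q / 2 * (1 / real (deg E u) + 1 / real (deg E v))"
      by (simp add: q_def Psi_lam_P_worm_C0[OF 1 _ fin_B])
    with symmetric_case show ?thesis
      by (simp add: D_def q_def)
  next
    case 2
    have "Psi V E A * lam w M A * P_worm V E M w A u v
        = q / 2 * (1 / real (deg E u) + 1 / real (deg E v))"
      by (simp add: q_def Psi_lam_P_worm_C2_C0[OF 2 fin_B])
    with symmetric_case show ?thesis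
      by (simp add: D_def q_def)
  next
    case 3
    have "q / (2 * D) \<le> 2 * lam w M A * P_move E M w A u v"
      using P_move_lower_bound[OF assms(2,3) fin_B deg_bounds[of u] deg_bounds[of v]]
      by (simp add: q_def)
    moreover have "q / (2 * D) \<le> 2 * lam w M A * P_move E M w A v u"
      using P_move_lower_bound[OF assms(2,3) fin_B deg_bounds[of v] deg_bounds[of u]]
      by (simp add: q_def insert_commute)
    ultimately show ?thesis
      by (simp add: D_def q_def Psi_lam_P_worm_C2_C2[OF 3])
  qed
qed

theorem lemma1:
  fixes V :: "'a set" and E M A :: "'a set set" and w :: real and u v :: 'a
  assumes "simple_graph V E"
    and "0 < w" and "w < 1"
    and "M \<subseteq> E"
    and "A \<in> Wset V E"
    and "{u, v} \<in> E"
    and "symdiff A {{u, v}} \<in> Wset V E"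
  shows "Psi V E A * lam w M A * P_worm V E M w A u v
           \<ge> w ^ card (symdiff A M \<union> {{u, v}}) / (2 * real (max_degree V E))
       \<and> w ^ card (symdiff A M \<union> {{u, v}}) / (2 * real (max_degree V E))
           \<ge> w ^ card (symdiff (A \<union> {{u, v}}) M) / (2 * real (max_degree V E) * inverse w)"
proof
  have "finite E"
    using assms(1) by (rule simple_graph_finite_edges)
  then have fin_M: "finite M" and fin_A: "finite A"
    using assms(4,5) finite_subset by (auto simp: Wset_def Ck_def)
  show "Psi V E A * lam w M A * P_worm V E M w A u v
      \<ge> w ^ card (symdiff A M \<union> {{u, v}}) / (2 * real (max_degree V E))"
    using Psi_lam_P_worm_lower_bound[OF assms(1-3) fin_M assms(5-7)] .
  show "w ^ card (symdiff A M \<union> {{u, v}}) / (2 * real (max_degree V E))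
      \<ge> w ^ card (symdiff (A \<union> {{u, v}}) M) / (2 * real (max_degree V E) * inverse w)"
    using assms(2,3) card_symdiff_Un_singleton_le[OF fin_A fin_M]
    by (intro power_div_inverse_le) auto
qed

end
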